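(* Let $\mathcal{A},\mathcal{B},\mathcal{C}$ be finite-dimensional complex Hilbert spaces with $\dim\mathcal{C}\geq\dim(\mathcal{A}\otimes\mathcal{B})$, let $\ket{\mathrm{idle}}\in\mathcal{B}$ be a unit vector, and let $L$ be a subunitary operator on $\mathcal{A}\otimes\mathcal{B}$ with $L(\ket{\varphi}\otimes\ket{\mathrm{idle}})=\ket{\varphi}\otimes\ket{\mathrm{idle}}$ for all $\ket{\varphi}\in\mathcal{A}$. Let $\ket{\xi}\neq 0$ and $\ket{\tau}$ be vectors in $\mathcal{A}\otimes\mathcal{B}\otimes\mathcal{C}$. Let $\overline{\pi}$ be a positive semidefinite operator on $\mathcal{A}\otimes\mathcal{B}$ satisfying $$\mathrm{tr}_{\mathcal{B}}\left(L\overline{\pi}L^\dagger-\overline{\pi}\right)=\mathrm{tr}_{\mathcal{B}\mathcal{C}}\left(\ket{\tau}\bra{\tau}-\ket{\xi}\bra{\xi}\right),$$ and let $\ket{v}\in\mathcal{A}\otimes\mathcal{B}\otimes\mathcal{C}$ be a purification of $\overline{\pi}$, i.e. $\mathrm{tr}_{\mathcal{C}}\ket{v}\bra{v}=\overline{\pi}$. Then for every integer $T'>0$, the operators $$\pi^j=\left(\frac{T'-j}{T'}\,\mathrm{tr}_{\mathcal{B}\mathcal{C}}\ket{\xi}\bra{\xi}+\frac{j}{T'}\,\mathrm{tr}_{\mathcal{B}\mathcal{C}}\ket{\tau}\bra{\tau}\right)\otimes\ket{\mathrm{idle}}\bra{\mathrm{idle}}+\frac{\overline{\pi}}{T'},\qquad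 0\leq j<T',$$ are positive semidefinite and satisfy $\mathrm{tr}_{\mathcal{B}}\pi^{j+1}=\mathrm{tr}_{\mathcal{B}}(L\pi^jL^\dagger)$ for $0\leq j\leq T'-2$, and they constitute a $T'$-timestep algorithm (with ancilla space $\mathcal{C}\otimes\mathbb{C}^2$, i.e. an added qubit) transforming $$\ket{\xi}\otimes\ket{0}+\frac{\ket{v}}{\sqrt{T'}}\otimes\ket{1}\ \mapsto\ \ket{\tau}\otimes\ket{0}+\frac{\ket{v}}{\sqrt{T'}}\otimes\ket{1}.$$
   Context: A $T$-timestep algorithm with ancilla space $\mathcal{C}'$ consists of unitaries $U_0,\dots,U_T$ on $\mathcal{B}\otimes\mathcal{C}'$ and applies $E=(I_{\mathcal{A}}\otimes U_T)(L\otimes I_{\mathcal{C}'})(I_{\mathcal{A}}\otimes U_{T-1})\cdots(L\otimes I_{\mathcal{C}'})(I_{\mathcal{A}}\otimes U_0)$ to a state in $\mathcal{A}\otimes\mathcal{B}\otimes\mathcal{C}'$; it transforms $\ket{x}\mapsto\ket{y}$ if $E\ket{x}=\ket{y}$. Its intermediate states are $\ket{\Phi^j}=(I_{\mathcal{A}}\otimes U_j)(L\otimes I)\cdots(L\otimes I)(I_{\mathcal{A}}\otimes U_0)\ket{x}$ ($j$ applications of $L$), and "the sequence $(\pi^j)$ constitutes the algorithm" means $\pi^j=\mathrm{tr}_{\mathcal{C}'}\ket{\Phi^j}\bra{\Phi^j}$. Subunitary means $\|L\ket{\varphi}\|\leq\|\ket{\varphi}\|$ for all $\ket{\varphi}$.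 States need not be normalized; $\mathrm{tr}_{\mathcal{B}}$ etc. are partial traces. *)

theory Defs
  imports "Jordan_Normal_Form.Matrix" Complex_Main
begin

text \<open>Finite-dimensional complex Hilbert spaces are modelled as C^n (vectors of
  dimension n).  Tensor products use the Kronecker (lexicographic) index
  convention: index (i,k) of X \<otimes> Y (dim Y = m) is i*m + k.\<close>

definition kron_vec :: "complex vec \<Rightarrow> complex vec \<Rightarrow> complex vec" where
  "kron_vec x y = vec (dim_vec x * dim_vec y)
     (\<lambda>i. x $ (i div dim_vec y) * y $ (i mod dim_vec y))"

definition kron_mat :: "complex mat \<Rightarrow> complex mat \<Rightarrow> complex mat" where
  "kron_mat A B = mat (dim_row A * dim_row B) (dim_col A * dim_col B)
     (\<lambda>(i,j). A $$ (i div dim_row B, j div dim_col B) * B $$ (i mod dim_row B, j mod dim_col B))"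

definition dagger :: "complex mat \<Rightarrow> complex mat" where
  "dagger A = mat (dim_col A) (dim_row A) (\<lambda>(i,j). cnj (A $$ (j,i)))"

definition ket_bra :: "complex vec \<Rightarrow> complex mat" where
  "ket_bra x = mat (dim_vec x) (dim_vec x) (\<lambda>(i,j). x $ i * cnj (x $ j))"

definition vnorm :: "complex vec \<Rightarrow> real" where
  "vnorm x = sqrt (\<Sum>i<dim_vec x. (cmod (x $ i))\<^sup>2)"

definition ptrace2 :: "nat \<Rightarrow> nat \<Rightarrow> complex mat \<Rightarrow> complex mat" where
  "ptrace2 dX dY M = mat dX dX (\<lambda>(i,j). \<Sum>k<dY. M $$ (i*dY + k, j*dY + k))"

text \<open>Positive semidefinite operator on C^n: <v, M v> is real and nonnegative
  for all v (over the complex numbers this is equivalent to Hermitian with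
  nonnegative spectrum).\<close>
definition psd :: "nat \<Rightarrow> complex mat \<Rightarrow> bool" where
  "psd n M \<longleftrightarrow> M \<in> carrier_mat n n \<and>
     (\<forall>v \<in> carrier_vec n. let z = (\<Sum>i<n. cnj (v $ i) * (M *\<^sub>v v) $ i)
                           in Im z = 0 \<and> Re z \<ge> 0)"

definition subunitary :: "nat \<Rightarrow> complex mat \<Rightarrow> bool" where
  "subunitary n L \<longleftrightarrow> L \<in> carrier_mat n n \<and>
     (\<forall>\<phi> \<in> carrier_vec n. vnorm (L *\<^sub>v \<phi>) \<le> vnorm \<phi>)"

definition unitary :: "nat \<Rightarrow> complex mat \<Rightarrow> bool" where
  "unitary n U \<longleftrightarrow> U \<in> carrier_mat n n \<and> dagger U * U = 1\<^sub>m n"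

fun alg_state :: "nat \<Rightarrow> nat \<Rightarrow> complex mat \<Rightarrow> (nat \<Rightarrow> complex mat) \<Rightarrow> complex vec \<Rightarrow> nat \<Rightarrow> complex vec" where
  "alg_state dA dC' L U x 0 = kron_mat (1\<^sub>m dA) (U 0) *\<^sub>v x"
| "alg_state dA dC' L U x (Suc j) =
     kron_mat (1\<^sub>m dA) (U (Suc j)) *\<^sub>v (kron_mat L (1\<^sub>m dC') *\<^sub>v alg_state dA dC' L U x j)"

definition constitutes_algorithm ::
  "nat \<Rightarrow> nat \<Rightarrow> nat \<Rightarrow> complex mat \<Rightarrow> nat \<Rightarrow> (nat \<Rightarrow> complex mat) \<Rightarrow> complex vec \<Rightarrow> complex vec \<Rightarrow> bool" where
  "constitutes_algorithm dA dB dC' L T \<pi> x y \<longleftrightarrow>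
     (\<exists>U. (\<forall>j\<le>T. unitary (dB * dC') (U j)) \<and>
          alg_state dA dC' L U x T = y \<and>
          (\<forall>j<T. \<pi> j = ptrace2 (dA * dB) dC' (ket_bra (alg_state dA dC' L U x j))))"

end

theory Submission
  imports Defs "Jordan_Normal_Form.Determinant"
begin

text \<open>Since \<open>L\<close> fixes every
  operator \<open>\<rho> \<otimes> |idle\<rangle>\<langle>idle|\<close>, applying \<open>L\<close> changes the reduced state on \<open>A\<close> only
  through \<open>\<pi>bar / T'\<close>, and by the balance condition this change is exactly one interpolation
  step. Each \<open>\<pi>\<^sup>j\<close> is a Gram matrix, hence positive, and since \<open>dim (C \<otimes> \<complex>\<^sup>2) \<ge> dim (A \<otimes> B)\<close>
  it has a purification into \<open>A \<otimes> B \<otimes> C \<otimes> \<complex>\<^sup>2\<close>. The extra qubit makes the reduced states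
  on \<open>A\<close> of the initial and final vectors those of \<open>\<pi>\<^sup>0\<close> and of \<open>L \<pi>\<^bsup>T' - 1\<^esup> L\<^sup>\<dagger>\<close>. By
  Uhlmann's theorem, proved here with Householder reflections, vectors with equal reduced
  states on \<open>A\<close> differ by a unitary on the remaining factors; these unitaries link consecutive
  purifications and form the algorithm.\<close>

lemma sum_lessThan_add:
  fixes f :: "nat \<Rightarrow> 'a::comm_monoid_add"
  shows "(\<Sum>k<m + n. f k) = (\<Sum>k<m. f k) + (\<Sum>k<n. f (m + k))"
  by (induction n) (simp_all add: add.assoc)

lemma sum_lessThan_mult:
  fixes f :: "nat \<Rightarrow> 'a::comm_monoid_add"
  shows "(\<Sum>k<m * n. f k) = (\<Sum>a<m. \<Sum>b<n. f (a * n + b))"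
proof (induction m)
  case (Suc m)
  have "(\<Sum>k<Suc m * n. f k) = (\<Sum>k<m * n + n. f k)"
    by (simp add: add.commute)
  also have "\<dots> = (\<Sum>a<Suc m. \<Sum>b<n. f (a * n + b))"
    by (simp add: sum_lessThan_add Suc.IH)
  finally show ?case .
qed simp

lemma div_mod_less_mult:
  fixes i n k :: nat
  assumes "i < n * k"
  shows "i div k < n" "i mod k < k"
proof -
  have "k > 0"
    using assms by (cases k) auto
  then show "i div k < n" "i mod k < k"
    using assms by (simp_all add: less_mult_imp_div_less)
qed

lemma mult_add_less_mult:
  fixes a e n k :: nat
  assumes "a < n" "e < k"
  shows "a * k + e < n * k"
proof -
  have "a * k + e < Suc a * k" using assms(2) by simp
  also have "\<dots> \<le> n * k" using assms(1) by (intro mult_right_mono) auto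
  finally show ?thesis .
qed

lemma dagger_carrier [simp]: "A \<in> carrier_mat n m \<Longrightarrow> dagger A \<in> carrier_mat m n"
  by (simp add: dagger_def)

lemma dim_dagger [simp]: "dim_row (dagger A) = dim_col A" "dim_col (dagger A) = dim_row A"
  by (simp_all add: dagger_def)

lemma index_dagger [simp]:
  "i < dim_col A \<Longrightarrow> j < dim_row A \<Longrightarrow> dagger A $$ (i, j) = cnj (A $$ (j, i))"
  by (simp add: dagger_def)

lemma dagger_dagger [simp]: "dagger (dagger A) = A"
  by (rule eq_matI) (auto simp: dagger_def)

lemma dagger_one [simp]: "dagger (1\<^sub>m n) = 1\<^sub>m n"
  by (rule eq_matI) (auto simp: dagger_def)

lemma dagger_mult:
  assumes "A \<in> carrier_mat n k" "B \<in> carrier_mat k m"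
  shows "dagger (A * B) = dagger B * dagger A"
  by (rule eq_matI) (use assms in \<open>auto simp: scalar_prod_def mult.commute\<close>)

lemma gram_index:
  assumes "X \<in> carrier_mat n m" "a < n" "b < n"
  shows "(X * dagger X) $$ (a, b) = (\<Sum>e<m. X $$ (a, e) * cnj (X $$ (b, e)))"
  using assms by (simp add: scalar_prod_def atLeast0LessThan)

lemma unitary_carrier: "unitary n U \<Longrightarrow> U \<in> carrier_mat n n"
  by (simp add: unitary_def)

lemma unitary_mult_dagger:
  assumes "unitary n U"
  shows "U * dagger U = 1\<^sub>m n"
  using assms mat_mult_left_right_inverse[of "dagger U" n U] by (simp add: unitary_def)

lemma unitary_one: "unitary n (1\<^sub>m n)"
  by (simp add: unitary_def)

lemma unitary_mult:
  assumes U: "unitary n U" and V: "unitary n V"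
  shows "unitary n (U * V)"
proof -
  have Uc: "U \<in> carrier_mat n n" and Vc: "V \<in> carrier_mat n n"
    using U V by (simp_all add: unitary_def)
  have "dagger (U * V) * (U * V) = dagger V * dagger U * (U * V)"
    by (simp add: dagger_mult[OF Uc Vc])
  also have "\<dots> = dagger V * (dagger U * U * V)"
    using Uc Vc by (simp add: assoc_mult_mat[of _ n n _ n _ n])
  also have "\<dots> = 1\<^sub>m n"
    using U V Vc by (simp add: unitary_def)
  finally show ?thesis
    using Uc Vc by (simp add: unitary_def)
qed

lemma unitary_dagger:
  assumes "unitary n U"
  shows "unitary n (dagger U)"
  using assms unitary_mult_dagger[OF assms] by (simp add: unitary_def)

lemma unitary_transpose:
  assumes "unitary n U"
  shows "unitary n (transpose_mat U)"
proof -
  have U: "U \<in> carrier_mat n n"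
    using assms by (simp add: unitary_def)
  have "dagger (transpose_mat U) * transpose_mat U = transpose_mat (U * dagger U)"
    by (rule eq_matI) (use U in \<open>auto simp: scalar_prod_def mult.commute\<close>)
  then show ?thesis
    using U unitary_mult_dagger[OF assms] by (simp add: unitary_def)
qed

lemma gram_mult_unitary:
  assumes V: "unitary m V" and X: "X \<in> carrier_mat n m"
  shows "(X * V) * dagger (X * V) = X * dagger X"
proof -
  have Vc: "V \<in> carrier_mat m m"
    using V by (simp add: unitary_def)
  have "(X * V) * dagger (X * V) = X * (V * (dagger V * dagger X))"
    using X Vc mult_carrier_mat[OF dagger_carrier[OF Vc] dagger_carrier[OF X]]
    by (simp add: dagger_mult[OF X Vc] assoc_mult_mat[of _ n m _ m _ n])
  also have "\<dots> = X * (V * dagger V * dagger X)"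
    using X Vc by (simp add: assoc_mult_mat[of _ m m _ m _ n])
  also have "\<dots> = X * dagger X"
    using X by (simp add: unitary_mult_dagger[OF V])
  finally show ?thesis .
qed

section \<open>Householder reflections\<close>

lemma vnorm_nonneg: "vnorm u \<ge> 0"
  by (simp add: vnorm_def sum_nonneg)

lemma of_real_vnorm_square:
  "complex_of_real ((vnorm u)\<^sup>2) = (\<Sum>i<dim_vec u. u $ i * cnj (u $ i))"
  by (simp add: vnorm_def sum_nonneg of_real_sum complex_norm_square del: of_real_power)

lemma vnorm_pos:
  assumes "u \<in> carrier_vec m" "u \<noteq> 0\<^sub>v m"
  shows "vnorm u > 0"
proof -
  obtain i where i: "i < m" "u $ i \<noteq> 0"
    using assms by (metis eq_vecI index_zero_vec carrier_vecD)
  have "(\<Sum>i<m. (cmod (u $ i))\<^sup>2) > 0"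
    using i by (intro sum_pos2[of _ i]) auto
  then show ?thesis
    using assms(1) by (simp add: vnorm_def)
qed

lemma unitary_reflection:
  fixes h :: "nat \<Rightarrow> complex" and c :: real
  assumes \<omega>: "cmod \<omega> = 1" and c: "c * (\<Sum>i<m. (cmod (h i))\<^sup>2) = 2"
  shows "unitary m (mat m m (\<lambda>(i, j). \<omega> * ((if i = j then 1 else 0) - c * (h i * cnj (h j)))))"
    (is "unitary m ?R")
proof -
  let ?\<delta> = "\<lambda>i j. if i = j then 1 else 0 :: complex"
  have \<omega>\<omega>: "cnj \<omega> * \<omega> = 1"
    using \<omega> complex_norm_square[of \<omega>] by (simp add: mult.commute)
  have hh: "complex_of_real c * (\<Sum>k<m. cnj (h k) * h k) = 2"
    using arg_cong[OF c, of complex_of_real]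
    by (simp add: of_real_sum complex_norm_square mult.commute del: of_real_power)
  have "dagger ?R * ?R = 1\<^sub>m m"
  proof (rule eq_matI)
    fix i j assume "i < dim_row (1\<^sub>m m)" "j < dim_col (1\<^sub>m m)"
    then have ij: "i < m" "j < m" by auto
    have expand: "(?\<delta> k i - c * (cnj (h k) * h i)) * (?\<delta> k j - c * (h k * cnj (h j)))
      = (if k = i then ?\<delta> i j else 0) - (if k = i then c * (h i * cnj (h j)) else 0)
        - (if k = j then c * (h i * cnj (h j)) else 0) + c * c * (h i * cnj (h j)) * (cnj (h k) * h k)"
      for k
      by (auto simp: algebra_simps)
    have "(dagger ?R * ?R) $$ (i, j) = (\<Sum>k<m. cnj (?R $$ (k, i)) * ?R $$ (k, j))"
      using ij by (simp add: scalar_prod_def atLeast0LessThan)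
    also have "\<dots>
        = (\<Sum>k<m. cnj \<omega> * \<omega> * ((?\<delta> k i - c * (cnj (h k) * h i)) * (?\<delta> k j - c * (h k * cnj (h j)))))"
      by (intro sum.cong refl) (use ij in \<open>auto simp: algebra_simps\<close>)
    also have "\<dots> = ?\<delta> i j + h i * cnj (h j) * (c * (c * (\<Sum>k<m. cnj (h k) * h k)) - 2 * c)"
      unfolding \<omega>\<omega> expand sum.distrib sum_subtractf sum_distrib_left[symmetric]
      using ij by (simp add: algebra_simps)
    also have "\<dots> = ?\<delta> i j"
      by (simp add: hh)
    finally show "(dagger ?R * ?R) $$ (i, j) = 1\<^sub>m m $$ (i, j)"
      using ij by simp
  qed auto
  then show ?thesis
    by (simp add: unitary_def)
qed

text \<open>The reflection in the hyperplane orthogonal to \<open>cnj u + t e\<^sub>0\<close>, with the phase of \<open>t\<close>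
  matched to that of \<open>cnj (u $ 0)\<close>, maps \<open>u\<close> to a multiple of \<open>e\<^sub>0\<close>; a final phase makes the
  multiple \<open>vnorm u\<close>.\<close>
lemma householder:
  assumes u: "u \<in> carrier_vec m"
  shows "\<exists>V. unitary m V \<and> (\<forall>j<m. u \<bullet> col V j = (if j = 0 then complex_of_real (vnorm u) else 0))"
proof (cases "u = 0\<^sub>v m")
  case True
  then show ?thesis
    using unitary_one by (intro exI[of _ "1\<^sub>m m"]) (auto simp: vnorm_def scalar_prod_def)
next
  case False
  define r where "r = vnorm u"
  define a where "a = cmod (u $ 0)"
  have r: "r > 0"
    using vnorm_pos[OF u False] by (simp add: r_def)
  have m: "0 < m"
    using u False by (metis eq_vecI carrier_vecD gr0I index_zero_vec(2) not_less_zero)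
  obtain \<sigma> where \<sigma>: "cmod \<sigma> = 1" "u $ 0 * \<sigma> = complex_of_real a"
  proof (cases "u $ 0 = 0")
    case True
    then show ?thesis using that[of 1] by (simp add: a_def)
  next
    case False
    then show ?thesis
      using that[of "cnj (u $ 0) / complex_of_real a"]
      by (simp add: a_def norm_divide power2_eq_square flip: complex_norm_square)
  qed
  define t where "t = complex_of_real r * \<sigma>"
  have tt: "t * cnj t = complex_of_real (r\<^sup>2)"
    using \<sigma>(1) complex_norm_square[of \<sigma>] by (simp add: t_def power2_eq_square algebra_simps)
  have ut: "u $ 0 * t = complex_of_real (r * a)"
    using \<sigma>(2) by (simp add: t_def algebra_simps)
  have uu: "(\<Sum>i<m. u $ i * cnj (u $ i)) = complex_of_real (r\<^sup>2)"
    using of_real_vnorm_square[of u] u by (simp add: r_def)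
  define h where "h i = cnj (u $ i) + (if i = 0 then t else 0)" for i
  have uh: "(\<Sum>i<m. u $ i * h i) = complex_of_real (r\<^sup>2 + r * a)"
    using m uu ut by (simp add: h_def distrib_left sum.distrib if_distrib[of "(*) _"] cong: if_cong)
  have "complex_of_real ((cmod (h i))\<^sup>2)
      = u $ i * cnj (u $ i) + (if i = 0 then u $ 0 * t + cnj (u $ 0 * t) + t * cnj t else 0)" for i
    by (cases "i = 0") (simp_all add: complex_norm_square h_def algebra_simps del: of_real_power)
  then have "complex_of_real (\<Sum>i<m. (cmod (h i))\<^sup>2)
      = (\<Sum>i<m. u $ i * cnj (u $ i)) + (u $ 0 * t + cnj (u $ 0 * t) + t * cnj t)"
    using m by (simp add: of_real_sum sum.distrib del: of_real_power)
  also have "\<dots> = complex_of_real (2 * (r\<^sup>2 + r * a))"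
    unfolding uu ut tt by simp
  finally have hh: "(\<Sum>i<m. (cmod (h i))\<^sup>2) = 2 * (r\<^sup>2 + r * a)"
    by (simp only: of_real_eq_iff)
  have "r\<^sup>2 + r * a > 0"
    using r by (simp add: a_def add_pos_nonneg)
  define c where "c = 1 / (r\<^sup>2 + r * a)"
  have cx: "c * (r\<^sup>2 + r * a) = 1"
    using \<open>r\<^sup>2 + r * a > 0\<close> by (simp add: c_def)
  then have c: "c * (\<Sum>i<m. (cmod (h i))\<^sup>2) = 2"
    unfolding hh by (metis mult.left_commute mult.right_neutral)
  have cuh: "complex_of_real c * (\<Sum>i<m. u $ i * h i) = 1"
    by (metis cx of_real_1 of_real_mult uh)
  define V where "V = mat m m (\<lambda>(i, j). - \<sigma> * ((if i = j then 1 else 0) - c * (h i * cnj (h j))))"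
  have "unitary m V"
    unfolding V_def using \<sigma>(1) c by (intro unitary_reflection) auto
  moreover have "u \<bullet> col V j = (if j = 0 then complex_of_real r else 0)" if j: "j < m" for j
  proof -
    have "u \<bullet> col V j = (\<Sum>i<m. u $ i * V $$ (i, j))"
      using u j by (simp add: scalar_prod_def atLeast0LessThan V_def)
    also have "\<dots> = (\<Sum>i<m. - \<sigma> * ((if i = j then u $ j else 0) - c * cnj (h j) * (u $ i * h i)))"
      by (intro sum.cong refl) (use j in \<open>auto simp: V_def algebra_simps\<close>)
    also have "\<dots> = - \<sigma> * (u $ j - cnj (h j) * (c * (\<Sum>i<m. u $ i * h i)))"
      unfolding sum_distrib_left[symmetric] sum_subtractf using j by (simp add: algebra_simps)
    also have "\<dots> = (if j = 0 then \<sigma> * cnj t else 0)"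
      by (simp add: cuh) (simp add: h_def)
    also have "\<dots> = (if j = 0 then complex_of_real r else 0)"
      using \<sigma>(1) complex_norm_square[of \<sigma>] by (simp add: t_def power2_eq_square)
    finally show ?thesis .
  qed
  ultimately show ?thesis
    by (auto simp: r_def)
qed

lemma mult_householder_row:
  assumes X: "X \<in> carrier_mat n m" and a: "a < n"
  shows "\<exists>V. unitary m V \<and>
    (\<forall>j<m. (X * V) $$ (a, j) = (if j = 0 then complex_of_real (vnorm (row X a)) else 0))"
proof -
  have "row X a \<in> carrier_vec m"
    using X by auto
  then obtain V where V: "unitary m V"
    and row: "\<forall>j<m. row X a \<bullet> col V j = (if j = 0 then complex_of_real (vnorm (row X a)) else 0)"
    using householder by blast
  then show ?thesis
    using X a unitary_carrier[OF V] by auto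
qed

section \<open>Unitary freedom of Gram factorisations\<close>

definition drop_first_col :: "complex mat \<Rightarrow> complex mat" where
  "drop_first_col X = mat (dim_row X) (dim_col X - 1) (\<lambda>(a, e). X $$ (a, Suc e))"

definition block_diag_one :: "complex mat \<Rightarrow> complex mat" where
  "block_diag_one W = mat (Suc (dim_row W)) (Suc (dim_row W))
     (\<lambda>(i, j). if i = 0 \<and> j = 0 then 1 else if i = 0 \<or> j = 0 then 0 else W $$ (i - 1, j - 1))"

lemma drop_first_col_carrier: "X \<in> carrier_mat n (Suc m) \<Longrightarrow> drop_first_col X \<in> carrier_mat n m"
  by (simp add: drop_first_col_def)

lemma block_diag_one_carrier: "W \<in> carrier_mat m m \<Longrightarrow> block_diag_one W \<in> carrier_mat (Suc m) (Suc m)"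
  by (simp add: block_diag_one_def)

lemma unitary_block_diag_one:
  assumes W: "unitary m W"
  shows "unitary (Suc m) (block_diag_one W)"
proof -
  have Wc: "W \<in> carrier_mat m m"
    using W by (simp add: unitary_def)
  let ?D = "block_diag_one W"
  have "dagger ?D * ?D = 1\<^sub>m (Suc m)"
  proof (rule eq_matI)
    fix i j assume "i < dim_row (1\<^sub>m (Suc m))" "j < dim_col (1\<^sub>m (Suc m))"
    then have ij: "i < Suc m" "j < Suc m" by auto
    have "(dagger ?D * ?D) $$ (i, j)
        = cnj (?D $$ (0, i)) * ?D $$ (0, j) + (\<Sum>k<m. cnj (?D $$ (Suc k, i)) * ?D $$ (Suc k, j))"
      using ij Wc by (simp add: block_diag_one_def scalar_prod_def atLeast0LessThan sum.lessThan_Suc_shift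
          del: sum.lessThan_Suc)
    also have "\<dots> = 1\<^sub>m (Suc m) $$ (i, j)"
    proof (cases i; cases j)
      fix i' j' assume i': "i = Suc i'" and j': "j = Suc j'"
      have "(\<Sum>k<m. cnj (W $$ (k, i')) * W $$ (k, j')) = (dagger W * W) $$ (i', j')"
        using ij Wc i' j' by (simp add: scalar_prod_def atLeast0LessThan)
      also have "\<dots> = 1\<^sub>m m $$ (i', j')"
        using W by (simp add: unitary_def)
      finally show ?thesis
        using ij Wc i' j' by (simp add: block_diag_one_def)
    qed (use ij Wc in \<open>auto simp: block_diag_one_def\<close>)
    finally show "(dagger ?D * ?D) $$ (i, j) = 1\<^sub>m (Suc m) $$ (i, j)" .
  qed (use Wc in \<open>auto simp: block_diag_one_def\<close>)
  then show ?thesis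
    using block_diag_one_carrier[OF Wc] by (simp add: unitary_def)
qed

lemma mult_block_diag_one_index:
  assumes X: "X \<in> carrier_mat n (Suc m)" and W: "W \<in> carrier_mat m m" and a: "a < n"
  shows "(X * block_diag_one W) $$ (a, 0) = X $$ (a, 0)"
    and "e < m \<Longrightarrow> (X * block_diag_one W) $$ (a, Suc e) = (drop_first_col X * W) $$ (a, e)"
  using assms
  by (simp_all add: block_diag_one_def drop_first_col_def scalar_prod_def atLeast0LessThan
      sum.lessThan_Suc_shift del: sum.lessThan_Suc)

lemma mult_block_diag_one_eqI:
  assumes X: "X \<in> carrier_mat n (Suc m)" and Y: "Y \<in> carrier_mat n (Suc m)" and W: "W \<in> carrier_mat m m"
    and col0: "\<forall>b<n. X $$ (b, 0) = Y $$ (b, 0)"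
    and rest: "drop_first_col X * W = drop_first_col Y"
  shows "X * block_diag_one W = Y"
proof (rule eq_matI)
  fix b e assume "b < dim_row Y" "e < dim_col Y"
  then have b: "b < n" and e: "e < Suc m"
    using Y by auto
  show "(X * block_diag_one W) $$ (b, e) = Y $$ (b, e)"
  proof (cases e)
    case (Suc e')
    then have "(X * block_diag_one W) $$ (b, e) = drop_first_col Y $$ (b, e')"
      using mult_block_diag_one_index(2)[OF X W b] e rest by simp
    then show ?thesis
      using Y b e Suc by (simp add: drop_first_col_def)
  qed (use mult_block_diag_one_index(1)[OF X W b] col0 b in simp)
qed (use X Y W block_diag_one_carrier in auto)

lemma gram_drop_first_col_index:
  assumes X: "X \<in> carrier_mat n (Suc m)" and "b < n" "c < n"
  shows "(drop_first_col X * dagger (drop_first_col X)) $$ (b, c)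
    = (X * dagger X) $$ (b, c) - X $$ (b, 0) * cnj (X $$ (c, 0))"
  unfolding gram_index[OF drop_first_col_carrier[OF X] assms(2,3)] gram_index[OF X assms(2,3)]
  using assms by (simp add: drop_first_col_def sum.lessThan_Suc_shift del: sum.lessThan_Suc)

lemma gram_index_first_basis_row:
  assumes X: "X \<in> carrier_mat n (Suc m)" and "a < n" "b < n"
    and row: "\<forall>j<Suc m. X $$ (a, j) = (if j = 0 then complex_of_real r else 0)"
  shows "(X * dagger X) $$ (b, a) = X $$ (b, 0) * complex_of_real r"
  unfolding gram_index[OF X assms(3,2)]
  using assms by (simp add: sum.lessThan_Suc_shift del: sum.lessThan_Suc)

lemma of_real_vnorm_row_square:
  assumes "X \<in> carrier_mat n m" "a < n"
  shows "complex_of_real ((vnorm (row X a))\<^sup>2) = (X * dagger X) $$ (a, a)"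
  unfolding gram_index[OF assms assms(2)] of_real_vnorm_square
  using assms by simp

lemma row_zero_if_gram_diag_zero:
  assumes "X \<in> carrier_mat n m" "a < n" "(X * dagger X) $$ (a, a) = 0" "e < m"
  shows "X $$ (a, e) = 0"
proof -
  have "vnorm (row X a) = 0"
    using of_real_vnorm_row_square[OF assms(1,2)] assms(3) by simp
  then have "\<forall>e<m. (cmod (X $$ (a, e)))\<^sup>2 = 0"
    using assms(1,2) by (simp add: vnorm_def sum_nonneg_eq_0_iff)
  then show ?thesis
    using assms(4) by simp
qed

text \<open>Uhlmann's theorem in matrix form: after rotating a nonzero row of both factors onto
  the first basis vector, the first columns agree and the remaining columns have equal Gram
  matrices, so induction on the number of columns applies.\<close>
lemma unitary_freedom_gram:
  "X \<in> carrier_mat n m \<Longrightarrow> Y \<in> carrier_mat n m \<Longrightarrow> X * dagger X = Y * dagger Y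
    \<Longrightarrow> \<exists>W. unitary m W \<and> X * W = Y"
proof (induction m arbitrary: X Y)
  case 0
  then have "X * 1\<^sub>m 0 = Y"
    by (intro eq_matI) auto
  then show ?case
    using unitary_one by blast
next
  case (Suc m)
  note X = Suc.prems(1) and Y = Suc.prems(2) and G = Suc.prems(3)
  show ?case
  proof (cases "\<exists>a<n. row X a \<noteq> 0\<^sub>v (Suc m)")
    case False
    then have X0: "X $$ (a, e) = 0" if "a < n" "e < Suc m" for a e
      using X that by (metis carrier_matD index_row(1) index_zero_vec(1))
    have "X * 1\<^sub>m (Suc m) = Y"
    proof (rule eq_matI)
      fix a e assume "a < dim_row Y" "e < dim_col Y"
      then have ae: "a < n" "e < Suc m"
        using Y by auto
      have "(Y * dagger Y) $$ (a, a) = 0"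
        unfolding G[symmetric] gram_index[OF X ae(1) ae(1)] using X0 ae by simp
      then show "(X * 1\<^sub>m (Suc m)) $$ (a, e) = Y $$ (a, e)"
        using row_zero_if_gram_diag_zero[OF Y ae(1) _ ae(2)] X0 X ae by simp
    qed (use X Y in auto)
    then show ?thesis
      using unitary_one by blast
  next
    case True
    then obtain a where a: "a < n" and nz: "row X a \<noteq> 0\<^sub>v (Suc m)"
      by blast
    define r where "r = vnorm (row X a)"
    have "row X a \<in> carrier_vec (Suc m)"
      using X by (metis carrier_matD(2) row_carrier)
    then have "r > 0"
      using vnorm_pos[OF _ nz] by (simp add: r_def)
    have "complex_of_real ((vnorm (row Y a))\<^sup>2) = complex_of_real (r\<^sup>2)"
      using of_real_vnorm_row_square[OF X a] of_real_vnorm_row_square[OF Y a] G by (simp add: r_def)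
    then have "(vnorm (row Y a))\<^sup>2 = r\<^sup>2"
      by (simp only: of_real_eq_iff)
    then have rY: "vnorm (row Y a) = r"
      by (metis power2_eq_iff_nonneg vnorm_nonneg r_def)
    obtain V1 where V1: "unitary (Suc m) V1"
      and rowX: "\<forall>j<Suc m. (X * V1) $$ (a, j) = (if j = 0 then complex_of_real r else 0)"
      using mult_householder_row[OF X a] r_def by blast
    obtain V2 where V2: "unitary (Suc m) V2"
      and rowY: "\<forall>j<Suc m. (Y * V2) $$ (a, j) = (if j = 0 then complex_of_real r else 0)"
      using mult_householder_row[OF Y a] rY by auto
    have V1c: "V1 \<in> carrier_mat (Suc m) (Suc m)" and V2c: "V2 \<in> carrier_mat (Suc m) (Suc m)"
      using V1 V2 by (simp_all add: unitary_carrier)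
    have X': "X * V1 \<in> carrier_mat n (Suc m)" and Y': "Y * V2 \<in> carrier_mat n (Suc m)"
      using X Y V1c V2c by auto
    have G': "(X * V1) * dagger (X * V1) = (Y * V2) * dagger (Y * V2)"
      using gram_mult_unitary[OF V1 X] gram_mult_unitary[OF V2 Y] G by simp
    have col0: "\<forall>b<n. (X * V1) $$ (b, 0) = (Y * V2) $$ (b, 0)"
      using gram_index_first_basis_row[OF X' a _ rowX] gram_index_first_basis_row[OF Y' a _ rowY]
        G' \<open>r > 0\<close> by (metis mult_cancel_right of_real_eq_0_iff order_less_irrefl)
    have "drop_first_col (X * V1) * dagger (drop_first_col (X * V1))
        = drop_first_col (Y * V2) * dagger (drop_first_col (Y * V2))"
    proof (rule eq_matI)
      fix b c
      assume "b < dim_row (drop_first_col (Y * V2) * dagger (drop_first_col (Y * V2)))"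
        and "c < dim_col (drop_first_col (Y * V2) * dagger (drop_first_col (Y * V2)))"
      then have bc: "b < n" "c < n"
        using drop_first_col_carrier[OF Y'] by auto
      show "(drop_first_col (X * V1) * dagger (drop_first_col (X * V1))) $$ (b, c)
          = (drop_first_col (Y * V2) * dagger (drop_first_col (Y * V2))) $$ (b, c)"
        unfolding gram_drop_first_col_index[OF X' bc] gram_drop_first_col_index[OF Y' bc]
        using G' col0 bc by simp
    qed (use drop_first_col_carrier[OF X'] drop_first_col_carrier[OF Y'] in auto)
    then obtain W where W: "unitary m W" and XW: "drop_first_col (X * V1) * W = drop_first_col (Y * V2)"
      using Suc.IH[OF drop_first_col_carrier[OF X'] drop_first_col_carrier[OF Y']] by blast
    have Wc: "W \<in> carrier_mat m m"
      using W by (simp add: unitary_carrier)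
    have "X * (V1 * block_diag_one W * dagger V2) = (X * V1 * block_diag_one W) * dagger V2"
      using X V1c V2c block_diag_one_carrier[OF Wc]
      by (simp add: assoc_mult_mat[of _ n "Suc m" _ "Suc m" _ "Suc m"])
    also have "\<dots> = Y * V2 * dagger V2"
      using mult_block_diag_one_eqI[OF X' Y' Wc col0 XW] by simp
    also have "\<dots> = Y"
      using Y V2c by (simp add: assoc_mult_mat[of _ n "Suc m" _ "Suc m" _ "Suc m"] unitary_mult_dagger[OF V2])
    moreover have "unitary (Suc m) (V1 * block_diag_one W * dagger V2)"
      using V1 V2 W by (intro unitary_mult unitary_dagger unitary_block_diag_one)
    ultimately show ?thesis
      by (intro exI[of _ "V1 * block_diag_one W * dagger V2"]) simp
  qed
qed

lemma lq_decomposition: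
  "X \<in> carrier_mat n m \<Longrightarrow> \<exists>W. unitary m W \<and> (\<forall>a<n. \<forall>e<m. a < e \<longrightarrow> (X * W) $$ (a, e) = 0)"
proof (induction m arbitrary: n X)
  case 0
  then show ?case
    using unitary_one by blast
next
  case (Suc m)
  note X = Suc.prems
  show ?case
  proof (cases n)
    case 0
    then show ?thesis
      using unitary_one by blast
  next
    case (Suc n')
    obtain V where V: "unitary (Suc m) V"
      and row0: "\<forall>j<Suc m. (X * V) $$ (0, j) = (if j = 0 then complex_of_real (vnorm (row X 0)) else 0)"
      using mult_householder_row[OF X] Suc by blast
    have Vc: "V \<in> carrier_mat (Suc m) (Suc m)"
      using V by (simp add: unitary_carrier)
    have XV: "X * V \<in> carrier_mat n (Suc m)"
      using X Vc by simp
    define Z where "Z = mat n' m (\<lambda>(a, e). (X * V) $$ (Suc a, Suc e))"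
    obtain W where W: "unitary m W" and ZW: "\<forall>a<n'. \<forall>e<m. a < e \<longrightarrow> (Z * W) $$ (a, e) = 0"
      using Suc.IH[of Z n'] by (auto simp: Z_def)
    have Wc: "W \<in> carrier_mat m m"
      using W by (simp add: unitary_carrier)
    have zero: "(X * V * block_diag_one W) $$ (a, Suc e) = 0" if "a < n" "e < m" "a < Suc e" for a e
    proof -
      have "(X * V * block_diag_one W) $$ (a, Suc e) = (\<Sum>k<m. (X * V) $$ (a, Suc k) * W $$ (k, e))"
        unfolding mult_block_diag_one_index(2)[OF XV Wc that(1,2)]
        using that X Vc Wc by (simp add: drop_first_col_def scalar_prod_def atLeast0LessThan)
      also have "\<dots> = 0"
      proof (cases a)
        case 0
        then show ?thesis
          using row0 by simp
      next
        case (Suc a')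
        have "(Z * W) $$ (a', e) = 0"
          using ZW Suc that \<open>n = Suc n'\<close> by simp
        then show ?thesis
          using Suc that Wc \<open>n = Suc n'\<close> by (simp add: Z_def scalar_prod_def atLeast0LessThan)
      qed
      finally show ?thesis .
    qed
    have "X * (V * block_diag_one W) = X * V * block_diag_one W"
      using X Vc block_diag_one_carrier[OF Wc] by (simp add: assoc_mult_mat[of _ n "Suc m" _ "Suc m" _ "Suc m"])
    then have "\<forall>a<n. \<forall>e<Suc m. a < e \<longrightarrow> (X * (V * block_diag_one W)) $$ (a, e) = 0"
      using zero by (metis Suc_less_eq less_nat_zero_code not0_implies_Suc)
    then show ?thesis
      using V W by (intro exI[of _ "V * block_diag_one W"]) (simp add: unitary_mult unitary_block_diag_one)
  qed
qed

lemma gram_factor_narrow: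
  assumes X: "X \<in> carrier_mat n m" and k: "n \<le> k"
  shows "\<exists>Y. Y \<in> carrier_mat n k \<and> Y * dagger Y = X * dagger X"
proof -
  obtain W where W: "unitary m W" and low: "\<forall>a<n. \<forall>e<m. a < e \<longrightarrow> (X * W) $$ (a, e) = 0"
    using lq_decomposition[OF X] by blast
  define Z where "Z = X * W"
  have Z: "Z \<in> carrier_mat n m"
    using X W by (simp add: Z_def unitary_carrier)
  define Y where "Y = mat n k (\<lambda>(a, e). if e < m then Z $$ (a, e) else 0)"
  have Y: "Y \<in> carrier_mat n k"
    by (simp add: Y_def)
  have "Y * dagger Y = Z * dagger Z"
  proof (rule eq_matI)
    fix a b assume "a < dim_row (Z * dagger Z)" "b < dim_col (Z * dagger Z)"
    then have ab: "a < n" "b < n"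
      using Z by auto
    have "(Y * dagger Y) $$ (a, b) = (\<Sum>e<min m k. Y $$ (a, e) * cnj (Y $$ (b, e)))"
      unfolding gram_index[OF Y ab] by (rule sum.mono_neutral_right) (use ab in \<open>auto simp: Y_def\<close>)
    also have "\<dots> = (\<Sum>e<min m k. Z $$ (a, e) * cnj (Z $$ (b, e)))"
      by (rule sum.cong) (use ab in \<open>auto simp: Y_def\<close>)
    also have "\<dots> = (Z * dagger Z) $$ (a, b)"
      unfolding gram_index[OF Z ab]
      by (rule sum.mono_neutral_left) (use low ab k in \<open>auto simp: Z_def\<close>)
    finally show "(Y * dagger Y) $$ (a, b) = (Z * dagger Z) $$ (a, b)" .
  qed (use Y Z in auto)
  also have "\<dots> = X * dagger X"
    unfolding Z_def by (rule gram_mult_unitary[OF W X])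
  finally show ?thesis
    using Y by blast
qed

section \<open>Vectors on a tensor product as matrices\<close>

definition reshape_mat :: "nat \<Rightarrow> nat \<Rightarrow> complex vec \<Rightarrow> complex mat" where
  "reshape_mat n k x = mat n k (\<lambda>(a, e). x $ (a * k + e))"

definition reshape_vec :: "nat \<Rightarrow> nat \<Rightarrow> complex mat \<Rightarrow> complex vec" where
  "reshape_vec n k X = vec (n * k) (\<lambda>i. X $$ (i div k, i mod k))"

lemma reshape_mat_carrier [simp]: "reshape_mat n k x \<in> carrier_mat n k"
  by (simp add: reshape_mat_def)

lemma dim_reshape [simp]:
  "dim_row (reshape_mat n k x) = n" "dim_col (reshape_mat n k x) = k"
  "dim_vec (reshape_vec n k X) = n * k"
  by (simp_all add: reshape_mat_def reshape_vec_def)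

lemma reshape_vec_carrier [simp]: "reshape_vec n k X \<in> carrier_vec (n * k)"
  by (simp add: reshape_vec_def)

lemma reshape_mat_vec: "X \<in> carrier_mat n k \<Longrightarrow> reshape_mat n k (reshape_vec n k X) = X"
  by (rule eq_matI) (auto simp: reshape_mat_def reshape_vec_def mult_add_less_mult)

lemma reshape_vec_mat:
  assumes x: "x \<in> carrier_vec (n * k)"
  shows "reshape_vec n k (reshape_mat n k x) = x"
proof (rule eq_vecI)
  fix i assume "i < dim_vec x"
  then have i: "i < n * k"
    using x by simp
  then have "i div k < n" "i mod k < k"
    by (rule div_mod_less_mult)+
  then show "reshape_vec n k (reshape_mat n k x) $ i = x $ i"
    using i by (simp add: reshape_vec_def reshape_mat_def)
qed (use x in \<open>simp add: reshape_vec_def\<close>)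

lemma kron_mat_mult_vec:
  assumes A: "A \<in> carrier_mat n n'" and B: "B \<in> carrier_mat k k'" and x: "x \<in> carrier_vec (n' * k')"
  shows "kron_mat A B *\<^sub>v x = reshape_vec n k (A * reshape_mat n' k' x * transpose_mat B)"
proof (rule eq_vecI)
  fix i assume "i < dim_vec (reshape_vec n k (A * reshape_mat n' k' x * transpose_mat B))"
  then have i: "i < n * k"
    by simp
  define p where "p = i div k"
  define c where "c = i mod k"
  have p: "p < n" and c: "c < k" and ipc: "i = p * k + c"
    using div_mod_less_mult[OF i] by (simp_all add: p_def c_def)
  have "(kron_mat A B *\<^sub>v x) $ i = (\<Sum>j<n' * k'. kron_mat A B $$ (i, j) * x $ j)"
    using i A B x by (simp add: scalar_prod_def atLeast0LessThan kron_mat_def)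
  also have "\<dots> = (\<Sum>p'<n'. \<Sum>f<k'. kron_mat A B $$ (i, p' * k' + f) * x $ (p' * k' + f))"
    by (rule sum_lessThan_mult)
  also have "\<dots> = (\<Sum>p'<n'. \<Sum>f<k'. A $$ (p, p') * B $$ (c, f) * x $ (p' * k' + f))"
    by (intro sum.cong refl) (use i A B p c in \<open>auto simp: kron_mat_def mult_add_less_mult p_def c_def\<close>)
  also have "\<dots> = (\<Sum>f<k'. (\<Sum>p'<n'. A $$ (p, p') * x $ (p' * k' + f)) * B $$ (c, f))"
    by (subst sum.swap) (simp add: sum_distrib_left sum_distrib_right ac_simps)
  also have "\<dots> = (A * reshape_mat n' k' x * transpose_mat B) $$ (p, c)"
    using A B p c by (simp add: reshape_mat_def scalar_prod_def atLeast0LessThan)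
  also have "\<dots> = reshape_vec n k (A * reshape_mat n' k' x * transpose_mat B) $ i"
    using i by (simp add: reshape_vec_def p_def c_def)
  finally show "(kron_mat A B *\<^sub>v x) $ i = reshape_vec n k (A * reshape_mat n' k' x * transpose_mat B) $ i" .
qed (use A B in \<open>simp add: kron_mat_def\<close>)

lemma dim_ptrace2 [simp]: "dim_row (ptrace2 n k M) = n" "dim_col (ptrace2 n k M) = n"
  by (simp_all add: ptrace2_def)

lemma ptrace2_carrier: "ptrace2 n k M \<in> carrier_mat n n"
  by (simp add: carrier_matI)

lemma ptrace2_index:
  "i < n \<Longrightarrow> j < n \<Longrightarrow> ptrace2 n k M $$ (i, j) = (\<Sum>c<k. M $$ (i * k + c, j * k + c))"
  by (simp add: ptrace2_def)

lemma dim_kron_vec [simp]: "dim_vec (kron_vec x y) = dim_vec x * dim_vec y"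
  by (simp add: kron_vec_def)

lemma dim_kron_mat [simp]:
  "dim_row (kron_mat A B) = dim_row A * dim_row B" "dim_col (kron_mat A B) = dim_col A * dim_col B"
  by (simp_all add: kron_mat_def)

lemma kron_vec_carrier: "x \<in> carrier_vec n \<Longrightarrow> y \<in> carrier_vec d \<Longrightarrow> kron_vec x y \<in> carrier_vec (n * d)"
  by (simp add: kron_vec_def)

lemma dim_ket_bra [simp]: "dim_row (ket_bra x) = dim_vec x" "dim_col (ket_bra x) = dim_vec x"
  by (simp_all add: ket_bra_def)

lemma ptrace2_ket_bra:
  assumes "x \<in> carrier_vec (n * k)"
  shows "ptrace2 n k (ket_bra x) = reshape_mat n k x * dagger (reshape_mat n k x)"
proof (rule eq_matI)
  fix i j assume "i < dim_row (reshape_mat n k x * dagger (reshape_mat n k x))"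
    and "j < dim_col (reshape_mat n k x * dagger (reshape_mat n k x))"
  then have ij: "i < n" "j < n"
    by auto
  show "ptrace2 n k (ket_bra x) $$ (i, j) = (reshape_mat n k x * dagger (reshape_mat n k x)) $$ (i, j)"
    unfolding gram_index[OF reshape_mat_carrier ij] ptrace2_index[OF ij]
    using ij assms by (simp add: ket_bra_def reshape_mat_def mult_add_less_mult)
qed auto

lemma unitary_freedom_purification:
  assumes x: "x \<in> carrier_vec (n * k)" and y: "y \<in> carrier_vec (n * k)"
    and eq: "ptrace2 n k (ket_bra x) = ptrace2 n k (ket_bra y)"
  shows "\<exists>U. unitary k U \<and> kron_mat (1\<^sub>m n) U *\<^sub>v x = y"
proof -
  have "reshape_mat n k x * dagger (reshape_mat n k x) = reshape_mat n k y * dagger (reshape_mat n k y)"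
    using eq by (simp add: ptrace2_ket_bra[OF x] ptrace2_ket_bra[OF y])
  then obtain W where W: "unitary k W" and XW: "reshape_mat n k x * W = reshape_mat n k y"
    using unitary_freedom_gram[OF reshape_mat_carrier reshape_mat_carrier] by blast
  have "kron_mat (1\<^sub>m n) (transpose_mat W) *\<^sub>v x = reshape_vec n k (reshape_mat n k x * W)"
    using kron_mat_mult_vec[OF one_carrier_mat _ x, of "transpose_mat W" k] unitary_carrier[OF W]
    by (simp add: left_mult_one_mat[OF reshape_mat_carrier])
  also have "\<dots> = y"
    using XW reshape_vec_mat[OF y] by simp
  finally show ?thesis
    using unitary_transpose[OF W] by blast
qed

lemma ptrace2_ket_bra_kron_mult_one:
  assumes L: "L \<in> carrier_mat N N" and x: "x \<in> carrier_vec (N * k)"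
  shows "ptrace2 N k (ket_bra (kron_mat L (1\<^sub>m k) *\<^sub>v x)) = L * ptrace2 N k (ket_bra x) * dagger L"
proof -
  let ?X = "reshape_mat N k x"
  have "kron_mat L (1\<^sub>m k) *\<^sub>v x = reshape_vec N k (L * ?X)"
    using kron_mat_mult_vec[OF L one_carrier_mat x] L
    by (simp add: right_mult_one_mat[OF mult_carrier_mat[OF L reshape_mat_carrier]])
  then have "ptrace2 N k (ket_bra (kron_mat L (1\<^sub>m k) *\<^sub>v x)) = (L * ?X) * dagger (L * ?X)"
    using L by (simp add: ptrace2_ket_bra reshape_mat_vec)
  also have "\<dots> = L * (?X * (dagger ?X * dagger L))"
    unfolding dagger_mult[OF L reshape_mat_carrier]
    using L by (intro assoc_mult_mat) (auto intro: mult_carrier_mat)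
  also have "\<dots> = L * (?X * dagger ?X * dagger L)"
    by (simp only: assoc_mult_mat[OF reshape_mat_carrier dagger_carrier[OF reshape_mat_carrier]
          dagger_carrier[OF L]])
  also have "\<dots> = L * (?X * dagger ?X) * dagger L"
    using L by (intro assoc_mult_mat[symmetric]) (auto intro: mult_carrier_mat)
  finally show ?thesis
    using ptrace2_ket_bra[OF x] by simp
qed

definition is_gram :: "nat \<Rightarrow> complex mat \<Rightarrow> bool" where
  "is_gram n M \<longleftrightarrow> (\<exists>m Z. Z \<in> carrier_mat n m \<and> M = Z * dagger Z)"

lemma is_gram_ptrace2_ket_bra: "x \<in> carrier_vec (n * k) \<Longrightarrow> is_gram n (ptrace2 n k (ket_bra x))"
  unfolding is_gram_def using ptrace2_ket_bra reshape_mat_carrier by blast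

lemma is_gram_add:
  assumes "is_gram n A" "is_gram n B"
  shows "is_gram n (A + B)"
proof -
  obtain m1 Z1 where Z1: "Z1 \<in> carrier_mat n m1" "A = Z1 * dagger Z1"
    using assms(1) by (auto simp: is_gram_def)
  obtain m2 Z2 where Z2: "Z2 \<in> carrier_mat n m2" "B = Z2 * dagger Z2"
    using assms(2) by (auto simp: is_gram_def)
  define Z where "Z = mat n (m1 + m2) (\<lambda>(a, q). if q < m1 then Z1 $$ (a, q) else Z2 $$ (a, q - m1))"
  have Z: "Z \<in> carrier_mat n (m1 + m2)"
    by (simp add: Z_def)
  have "A + B = Z * dagger Z"
  proof (rule eq_matI)
    fix a b assume "a < dim_row (Z * dagger Z)" "b < dim_col (Z * dagger Z)"
    then have ab: "a < n" "b < n"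
      using Z by auto
    have "(A + B) $$ (a, b) = (Z1 * dagger Z1) $$ (a, b) + (Z2 * dagger Z2) $$ (a, b)"
      using ab Z1 Z2 by simp
    also have "\<dots> = (Z * dagger Z) $$ (a, b)"
      unfolding gram_index[OF Z1(1) ab] gram_index[OF Z2(1) ab] gram_index[OF Z ab] sum_lessThan_add
      using ab by (simp add: Z_def)
    finally show "(A + B) $$ (a, b) = (Z * dagger Z) $$ (a, b)" .
  qed (use Z1 Z2 Z in auto)
  then show ?thesis
    unfolding is_gram_def using Z by blast
qed

lemma is_gram_smult:
  assumes "is_gram n A" "r \<ge> 0"
  shows "is_gram n (complex_of_real r \<cdot>\<^sub>m A)"
proof -
  obtain m Z where Z: "Z \<in> carrier_mat n m" "A = Z * dagger Z"
    using assms(1) by (auto simp: is_gram_def)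
  define Z' where "Z' = complex_of_real (sqrt r) \<cdot>\<^sub>m Z"
  have Z': "Z' \<in> carrier_mat n m"
    using Z by (simp add: Z'_def)
  have sq: "complex_of_real (sqrt r) * complex_of_real (sqrt r) = complex_of_real r"
    using assms(2) by (simp flip: of_real_mult)
  have "complex_of_real r \<cdot>\<^sub>m A = Z' * dagger Z'"
  proof (rule eq_matI)
    fix a b assume "a < dim_row (Z' * dagger Z')" "b < dim_col (Z' * dagger Z')"
    then have ab: "a < n" "b < n"
      using Z' by auto
    have "(complex_of_real r \<cdot>\<^sub>m A) $$ (a, b) = complex_of_real r * (Z * dagger Z) $$ (a, b)"
      using ab Z by simp
    also have "\<dots> = (Z' * dagger Z') $$ (a, b)"
      unfolding gram_index[OF Z(1) ab] gram_index[OF Z' ab] sum_distrib_left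
      using ab Z by (intro sum.cong refl) (simp add: Z'_def sq[symmetric] ac_simps)
    finally show "(complex_of_real r \<cdot>\<^sub>m A) $$ (a, b) = (Z' * dagger Z') $$ (a, b)" .
  qed (use Z Z' in auto)
  then show ?thesis
    unfolding is_gram_def using Z' by blast
qed

lemma is_gram_kron_ket_bra:
  assumes "is_gram n A" "w \<in> carrier_vec d"
  shows "is_gram (n * d) (kron_mat A (ket_bra w))"
proof -
  obtain m Z where Z: "Z \<in> carrier_mat n m" "A = Z * dagger Z"
    using assms(1) by (auto simp: is_gram_def)
  define Z' where "Z' = mat (n * d) m (\<lambda>(p, q). Z $$ (p div d, q) * w $ (p mod d))"
  have Z': "Z' \<in> carrier_mat (n * d) m"
    by (simp add: Z'_def)
  have "kron_mat A (ket_bra w) = Z' * dagger Z'"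
  proof (rule eq_matI)
    fix p p' assume "p < dim_row (Z' * dagger Z')" "p' < dim_col (Z' * dagger Z')"
    then have pp: "p < n * d" "p' < n * d"
      using Z' by auto
    note dm = div_mod_less_mult[OF pp(1)] div_mod_less_mult[OF pp(2)]
    have "kron_mat A (ket_bra w) $$ (p, p')
        = (Z * dagger Z) $$ (p div d, p' div d) * (w $ (p mod d) * cnj (w $ (p' mod d)))"
      using Z pp dm assms(2) by (simp add: kron_mat_def ket_bra_def)
    also have "\<dots> = (Z' * dagger Z') $$ (p, p')"
      unfolding gram_index[OF Z(1) dm(1,3)] gram_index[OF Z' pp] sum_distrib_right
      using pp by (intro sum.cong refl) (simp add: Z'_def algebra_simps)
    finally show "kron_mat A (ket_bra w) $$ (p, p') = (Z' * dagger Z') $$ (p, p')" .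
  qed (use Z Z' assms(2) in \<open>auto simp: kron_mat_def\<close>)
  then show ?thesis
    unfolding is_gram_def using Z' by blast
qed

lemma psd_if_is_gram:
  assumes "is_gram n M"
  shows "psd n M"
proof -
  obtain m Z where Z: "Z \<in> carrier_mat n m" "M = Z * dagger Z"
    using assms by (auto simp: is_gram_def)
  have "Im z = 0 \<and> Re z \<ge> 0"
    if v: "v \<in> carrier_vec n" and z: "z = (\<Sum>i<n. cnj (v $ i) * (M *\<^sub>v v) $ i)" for v z
  proof -
    define u where "u q = (\<Sum>j<n. cnj (Z $$ (j, q)) * v $ j)" for q
    have "z = (\<Sum>i<n. cnj (v $ i) * (\<Sum>j<n. (\<Sum>q<m. Z $$ (i, q) * cnj (Z $$ (j, q))) * v $ j))"
      unfolding z using Z v by (intro sum.cong refl) (simp add: scalar_prod_def atLeast0LessThan)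
    also have "\<dots> = (\<Sum>i<n. \<Sum>q<m. \<Sum>j<n. cnj (v $ i) * Z $$ (i, q) * cnj (Z $$ (j, q)) * v $ j)"
      by (simp add: sum_distrib_left sum_distrib_right algebra_simps) (rule sum.cong[OF refl], rule sum.swap)
    also have "\<dots> = (\<Sum>q<m. \<Sum>i<n. \<Sum>j<n. cnj (v $ i) * Z $$ (i, q) * cnj (Z $$ (j, q)) * v $ j)"
      by (rule sum.swap)
    also have "\<dots> = (\<Sum>q<m. cnj (u q) * u q)"
      unfolding u_def cnj_sum sum_distrib_right
      unfolding sum_distrib_left
      by (intro sum.cong refl) (simp add: algebra_simps)
    also have "\<dots> = complex_of_real (\<Sum>q<m. (cmod (u q))\<^sup>2)"
      by (simp add: of_real_sum complex_norm_square mult.commute del: of_real_power)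
    finally show ?thesis
      by (simp add: sum_nonneg)
  qed
  then show ?thesis
    unfolding psd_def Let_def using Z by auto
qed

lemma purification_exists:
  assumes "is_gram n M" "n \<le> k"
  shows "\<exists>\<psi>. \<psi> \<in> carrier_vec (n * k) \<and> ptrace2 n k (ket_bra \<psi>) = M"
proof -
  obtain m Z where Z: "Z \<in> carrier_mat n m" "M = Z * dagger Z"
    using assms(1) by (auto simp: is_gram_def)
  obtain Y where Y: "Y \<in> carrier_mat n k" "Y * dagger Y = Z * dagger Z"
    using gram_factor_narrow[OF Z(1) assms(2)] by blast
  have "ptrace2 n k (ket_bra (reshape_vec n k Y)) = M"
    using Y Z by (simp add: ptrace2_ket_bra reshape_mat_vec)
  then show ?thesis
    using reshape_vec_carrier by blast
qed

lemma ptrace2_add: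
  assumes "A \<in> carrier_mat (n * k) (n * k)" "B \<in> carrier_mat (n * k) (n * k)"
  shows "ptrace2 n k (A + B) = ptrace2 n k A + ptrace2 n k B"
  by (rule eq_matI) (use assms in \<open>auto simp: ptrace2_index mult_add_less_mult sum.distrib\<close>)

lemma ptrace2_ket_bra_diff:
  assumes "x \<in> carrier_vec (n * k)" "y \<in> carrier_vec (n * k)"
  shows "ptrace2 n k (ket_bra x - ket_bra y) = ptrace2 n k (ket_bra x) - ptrace2 n k (ket_bra y)"
  by (rule eq_matI) (use assms in \<open>auto simp: ptrace2_index ket_bra_def mult_add_less_mult sum_subtractf\<close>)

lemma ptrace2_diff:
  assumes "A \<in> carrier_mat (n * k) (n * k)" "B \<in> carrier_mat (n * k) (n * k)"
  shows "ptrace2 n k (A - B) = ptrace2 n k A - ptrace2 n k B"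
  by (rule eq_matI) (use assms in \<open>auto simp: ptrace2_index mult_add_less_mult sum_subtractf\<close>)

lemma ptrace2_smult:
  assumes "A \<in> carrier_mat (n * k) (n * k)"
  shows "ptrace2 n k (c \<cdot>\<^sub>m A) = c \<cdot>\<^sub>m ptrace2 n k A"
  by (rule eq_matI) (use assms in \<open>auto simp: ptrace2_index mult_add_less_mult sum_distrib_left\<close>)

lemma ptrace2_ptrace2: "ptrace2 n (k * l) M = ptrace2 n k (ptrace2 (n * k) l M)"
proof (rule eq_matI)
  fix i j assume "i < dim_row (ptrace2 n k (ptrace2 (n * k) l M))"
    and "j < dim_col (ptrace2 n k (ptrace2 (n * k) l M))"
  then have ij: "i < n" "j < n"
    by auto
  have "ptrace2 n (k * l) M $$ (i, j)
      = (\<Sum>b<k. \<Sum>c<l. M $$ (i * (k * l) + (b * l + c), j * (k * l) + (b * l + c)))"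
    using ij by (simp add: ptrace2_index sum_lessThan_mult)
  also have "\<dots> = (\<Sum>b<k. \<Sum>c<l. M $$ ((i * k + b) * l + c, (j * k + b) * l + c))"
    by (simp add: algebra_simps)
  also have "\<dots> = (\<Sum>b<k. ptrace2 (n * k) l M $$ (i * k + b, j * k + b))"
    using ij by (intro sum.cong refl) (simp add: ptrace2_index mult_add_less_mult)
  also have "\<dots> = ptrace2 n k (ptrace2 (n * k) l M) $$ (i, j)"
    using ij by (simp add: ptrace2_index)
  finally show "ptrace2 n (k * l) M $$ (i, j) = ptrace2 n k (ptrace2 (n * k) l M) $$ (i, j)" .
qed auto

lemma ptrace2_kron_ket_bra:
  assumes w: "w \<in> carrier_vec d" "vnorm w = 1" and \<rho>: "\<rho> \<in> carrier_mat n n"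
  shows "ptrace2 n d (kron_mat \<rho> (ket_bra w)) = \<rho>"
proof (rule eq_matI)
  fix i j assume "i < dim_row \<rho>" "j < dim_col \<rho>"
  then have ij: "i < n" "j < n"
    using \<rho> by auto
  have "(\<Sum>b<d. w $ b * cnj (w $ b)) = 1"
    using of_real_vnorm_square[of w] w by simp
  then show "ptrace2 n d (kron_mat \<rho> (ket_bra w)) $$ (i, j) = \<rho> $$ (i, j)"
    using ij \<rho> w by (simp add: ptrace2_index kron_mat_def ket_bra_def mult_add_less_mult
        flip: sum_distrib_left)
qed (use \<rho> in auto)

lemma ptrace2_ket_bra_qubit:
  assumes p: "p \<in> carrier_vec N" and q: "q \<in> carrier_vec N"
  shows "ptrace2 N 2 (ket_bra (kron_vec p (vec 2 (\<lambda>i. if i = 0 then 1 else 0))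
      + s \<cdot>\<^sub>v kron_vec q (vec 2 (\<lambda>i. if i = 1 then 1 else 0))))
    = ket_bra p + (s * cnj s) \<cdot>\<^sub>m ket_bra q"
  (is "ptrace2 N 2 (ket_bra ?x) = _")
proof (rule eq_matI)
  fix i j assume "i < dim_row (ket_bra p + (s * cnj s) \<cdot>\<^sub>m ket_bra q)"
    and "j < dim_col (ket_bra p + (s * cnj s) \<cdot>\<^sub>m ket_bra q)"
  then have ij: "i < N" "j < N"
    using p q by auto
  have x: "?x $ (a * 2 + c) = (if c = 0 then p $ a else s * q $ a)" if "a < N" "c < 2" for a c
    using that p q mult_add_less_mult[OF that] by (auto simp: kron_vec_def)
  have "ptrace2 N 2 (ket_bra ?x) $$ (i, j) = (\<Sum>c<2. ?x $ (i * 2 + c) * cnj (?x $ (j * 2 + c)))"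
    unfolding ptrace2_index[OF ij]
    by (intro sum.cong refl) (use ij p q in \<open>simp add: ket_bra_def mult_add_less_mult\<close>)
  also have "\<dots> = ?x $ (i * 2) * cnj (?x $ (j * 2)) + ?x $ (i * 2 + 1) * cnj (?x $ (j * 2 + 1))"
    by (simp add: numeral_2_eq_2)
  also have "\<dots> = (ket_bra p + (s * cnj s) \<cdot>\<^sub>m ket_bra q) $$ (i, j)"
    using ij p q x[OF ij(1), of 0] x[OF ij(1), of 1] x[OF ij(2), of 0] x[OF ij(2), of 1]
    by (simp add: ket_bra_def algebra_simps)
  finally show "ptrace2 N 2 (ket_bra ?x) $$ (i, j) = (ket_bra p + (s * cnj s) \<cdot>\<^sub>m ket_bra q) $$ (i, j)" .
qed (use p q in auto)

lemma col_kron_ket_bra: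
  assumes \<rho>: "\<rho> \<in> carrier_mat n n" and w: "w \<in> carrier_vec d" and q: "q < n * d"
  shows "col (kron_mat \<rho> (ket_bra w)) q = cnj (w $ (q mod d)) \<cdot>\<^sub>v kron_vec (col \<rho> (q div d)) w"
proof (rule eq_vecI)
  fix p assume "p < dim_vec (cnj (w $ (q mod d)) \<cdot>\<^sub>v kron_vec (col \<rho> (q div d)) w)"
  then have p: "p < n * d"
    using \<rho> w by (simp add: kron_vec_def)
  show "col (kron_mat \<rho> (ket_bra w)) q $ p = (cnj (w $ (q mod d)) \<cdot>\<^sub>v kron_vec (col \<rho> (q div d)) w) $ p"
    using \<rho> w p q div_mod_less_mult[OF p] div_mod_less_mult[OF q]
    by (simp add: kron_mat_def kron_vec_def ket_bra_def)
qed (use \<rho> w in \<open>simp add: kron_mat_def kron_vec_def\<close>)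

lemma mult_kron_ket_bra_eq:
  assumes L: "L \<in> carrier_mat (n * d) (n * d)" and w: "w \<in> carrier_vec d"
    and fixes_w: "\<forall>\<phi> \<in> carrier_vec n. L *\<^sub>v kron_vec \<phi> w = kron_vec \<phi> w"
    and \<rho>: "\<rho> \<in> carrier_mat n n"
  shows "L * kron_mat \<rho> (ket_bra w) = kron_mat \<rho> (ket_bra w)"
proof -
  let ?K = "kron_mat \<rho> (ket_bra w)"
  have K: "?K \<in> carrier_mat (n * d) (n * d)"
    by (rule carrier_matI) (use \<rho> w in simp_all)
  show ?thesis
  proof (rule mat_col_eqI)
    fix q assume "q < dim_col ?K"
    then have q: "q < n * d"
      using \<rho> w by simp
    let ?\<phi> = "col \<rho> (q div d)"
    have \<phi>: "?\<phi> \<in> carrier_vec n"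
      using carrier_matD(1)[OF \<rho>] col_dim[of \<rho>] by metis
    have "col (L * ?K) q = L *\<^sub>v col ?K q"
      using col_mult2[OF L K q] .
    also have "\<dots> = L *\<^sub>v (cnj (w $ (q mod d)) \<cdot>\<^sub>v kron_vec ?\<phi> w)"
      by (simp only: col_kron_ket_bra[OF \<rho> w q])
    also have "\<dots> = cnj (w $ (q mod d)) \<cdot>\<^sub>v (L *\<^sub>v kron_vec ?\<phi> w)"
      by (rule mult_mat_vec[OF L kron_vec_carrier[OF \<phi> w]])
    also have "\<dots> = col ?K q"
      by (simp only: fixes_w[rule_format, OF \<phi>] col_kron_ket_bra[OF \<rho> w q])
    finally show "col (L * ?K) q = col ?K q" .
  qed (use L \<rho> w in simp_all)
qed

lemma dagger_kron_ket_bra: "dagger (kron_mat \<rho> (ket_bra w)) = kron_mat (dagger \<rho>) (ket_bra w)"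
proof (rule eq_matI)
  fix i j assume "i < dim_row (kron_mat (dagger \<rho>) (ket_bra w))" "j < dim_col (kron_mat (dagger \<rho>) (ket_bra w))"
  then have i: "i < dim_col \<rho> * dim_vec w" and j: "j < dim_row \<rho> * dim_vec w"
    by simp_all
  show "dagger (kron_mat \<rho> (ket_bra w)) $$ (i, j) = kron_mat (dagger \<rho>) (ket_bra w) $$ (i, j)"
    using i j div_mod_less_mult[OF i] div_mod_less_mult[OF j]
    by (simp add: kron_mat_def ket_bra_def dagger_def)
qed auto

lemma sandwich_kron_ket_bra_eq:
  assumes L: "L \<in> carrier_mat (n * d) (n * d)" and w: "w \<in> carrier_vec d"
    and fixes_w: "\<forall>\<phi> \<in> carrier_vec n. L *\<^sub>v kron_vec \<phi> w = kron_vec \<phi> w"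
    and \<rho>: "\<rho> \<in> carrier_mat n n"
  shows "L * kron_mat \<rho> (ket_bra w) * dagger L = kron_mat \<rho> (ket_bra w)"
proof -
  let ?K = "kron_mat \<rho> (ket_bra w)"
  have K: "?K \<in> carrier_mat (n * d) (n * d)"
    by (rule carrier_matI) (use \<rho> w in simp_all)
  have "?K * dagger L = dagger (L * dagger ?K)"
    using dagger_mult[OF L dagger_carrier[OF K]] by simp
  also have "L * dagger ?K = dagger ?K"
    unfolding dagger_kron_ket_bra using mult_kron_ket_bra_eq[OF L w fixes_w] \<rho> by simp
  finally show ?thesis
    using mult_kron_ket_bra_eq[OF L w fixes_w \<rho>] by simp
qed

text \<open>Uhlmann's theorem supplies the unitaries: \<open>U\<^sub>j\<close> carries the state reached so far to a
  purification of \<open>\<pi> j\<close>, and \<open>U\<^sub>T\<close> carries the last one to \<open>y\<close>.\<close>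
lemma constitutes_algorithm_if_consistent:
  assumes L: "L \<in> carrier_mat (dA * dB) (dA * dB)" and T: "0 < T" and dim: "dA * dB \<le> dC'"
    and gram: "\<forall>j<T. is_gram (dA * dB) (\<pi> j)"
    and x: "x \<in> carrier_vec (dA * dB * dC')" and y: "y \<in> carrier_vec (dA * dB * dC')"
    and first: "ptrace2 dA (dB * dC') (ket_bra x) = ptrace2 dA dB (\<pi> 0)"
    and step: "\<forall>j. Suc j < T \<longrightarrow> ptrace2 dA dB (\<pi> (Suc j)) = ptrace2 dA dB (L * \<pi> j * dagger L)"
    and last: "ptrace2 dA (dB * dC') (ket_bra y) = ptrace2 dA dB (L * \<pi> (T - 1) * dagger L)"
  shows "constitutes_algorithm dA dB dC' L T \<pi> x y"
proof -
  have "\<exists>\<psi>. \<psi> \<in> carrier_vec (dA * dB * dC') \<and> ptrace2 (dA * dB) dC' (ket_bra \<psi>) = \<pi> j"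
    if "j < T" for j
    using purification_exists[OF gram[rule_format, OF that] dim] .
  then have "\<forall>j. \<exists>\<psi>. j < T \<longrightarrow> \<psi> \<in> carrier_vec (dA * dB * dC') \<and> ptrace2 (dA * dB) dC' (ket_bra \<psi>) = \<pi> j"
    by blast
  then obtain \<Psi> where "\<forall>j. j < T \<longrightarrow> \<Psi> j \<in> carrier_vec (dA * dB * dC') \<and> ptrace2 (dA * dB) dC' (ket_bra (\<Psi> j)) = \<pi> j"
    by (rule choice[THEN exE])
  then have \<Psi>: "\<And>j. j < T \<Longrightarrow> \<Psi> j \<in> carrier_vec (dA * dB * dC')"
    and purif: "\<And>j. j < T \<Longrightarrow> ptrace2 (dA * dB) dC' (ket_bra (\<Psi> j)) = \<pi> j"
    by simp_all
  define L\<Psi> where "L\<Psi> j = kron_mat L (1\<^sub>m dC') *\<^sub>v \<Psi> j" for j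
  define src where "src j = (if j = 0 then x else L\<Psi> (j - 1))" for j
  define tgt where "tgt j = (if j < T then \<Psi> j else y)" for j
  have "L\<Psi> j \<in> carrier_vec (dA * dB * dC')" for j
    unfolding L\<Psi>_def by (rule carrier_vecI) (use L in simp)
  then have src: "src j \<in> carrier_vec (dA * (dB * dC'))" for j
    using x by (simp add: src_def mult.assoc)
  have tgt: "tgt j \<in> carrier_vec (dA * (dB * dC'))" for j
    using y \<Psi> by (simp add: tgt_def mult.assoc)
  have reduced_src_tgt: "ptrace2 dA (dB * dC') (ket_bra (src j)) = ptrace2 dA (dB * dC') (ket_bra (tgt j))"
    if "j \<le> T" for j
  proof (cases j)
    case 0
    then show ?thesis
      using first T purif by (simp add: src_def tgt_def ptrace2_ptrace2)
  next
    case (Suc i)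
    then have "ptrace2 dA (dB * dC') (ket_bra (src j)) = ptrace2 dA dB (L * \<pi> i * dagger L)"
      using that \<Psi> purif L
      by (simp add: src_def L\<Psi>_def ptrace2_ptrace2 ptrace2_ket_bra_kron_mult_one)
    also have "\<dots> = ptrace2 dA (dB * dC') (ket_bra (tgt j))"
      using Suc that step last purif by (cases "Suc i < T") (auto simp: tgt_def ptrace2_ptrace2)
    finally show ?thesis .
  qed
  have "\<forall>j. \<exists>U. j \<le> T \<longrightarrow> unitary (dB * dC') U \<and> kron_mat (1\<^sub>m dA) U *\<^sub>v src j = tgt j"
    using unitary_freedom_purification[OF src tgt reduced_src_tgt] by auto
  then obtain U where "\<forall>j. j \<le> T \<longrightarrow> unitary (dB * dC') (U j) \<and> kron_mat (1\<^sub>m dA) (U j) *\<^sub>v src j = tgt j"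
    by (rule choice[THEN exE])
  then have U: "\<And>j. j \<le> T \<Longrightarrow> unitary (dB * dC') (U j)"
    and U_src: "\<And>j. j \<le> T \<Longrightarrow> kron_mat (1\<^sub>m dA) (U j) *\<^sub>v src j = tgt j"
    by simp_all
  have state: "alg_state dA dC' L U x j = tgt j" if "j \<le> T" for j
    using that
  proof (induction j)
    case 0
    then show ?case
      using U_src[of 0] by (simp add: src_def)
  next
    case (Suc j)
    then have "alg_state dA dC' L U x (Suc j) = kron_mat (1\<^sub>m dA) (U (Suc j)) *\<^sub>v src (Suc j)"
      by (simp add: src_def tgt_def L\<Psi>_def)
    then show ?case
      using U_src[OF Suc.prems] by simp
  qed
  show ?thesis
    unfolding constitutes_algorithm_def
  proof (intro exI[of _ U] conjI allI impI)
    show "alg_state dA dC' L U x T = y"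
      using state[of T] by (simp add: tgt_def)
  next
    fix j assume "j < T"
    then show "\<pi> j = ptrace2 (dA * dB) dC' (ket_bra (alg_state dA dC' L U x j))"
      using state[of j] purif by (simp add: tgt_def)
  qed (use U in auto)
qed

section \<open>The interpolating sequence\<close>

lemma sandwich_add_smult:
  assumes L: "L \<in> carrier_mat N N" and A: "A \<in> carrier_mat N N" and B: "B \<in> carrier_mat N N"
  shows "L * (A + c \<cdot>\<^sub>m B) * dagger L = L * A * dagger L + c \<cdot>\<^sub>m (L * B * dagger L)"
proof -
  have cB: "c \<cdot>\<^sub>m B \<in> carrier_mat N N"
    using B by simp
  have "L * (A + c \<cdot>\<^sub>m B) = L * A + c \<cdot>\<^sub>m (L * B)"
    using mult_add_distrib_mat[OF L A cB] mult_smult_distrib[OF L B] by simp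
  then show ?thesis
    using add_mult_distrib_mat[OF mult_carrier_mat[OF L A] smult_carrier_mat[OF mult_carrier_mat[OF L B]]
        dagger_carrier[OF L]] mult_smult_assoc_mat[OF mult_carrier_mat[OF L B] dagger_carrier[OF L]]
    by simp
qed

definition interpolation ::
  "nat \<Rightarrow> complex mat \<Rightarrow> complex mat \<Rightarrow> complex vec \<Rightarrow> complex mat \<Rightarrow> nat \<Rightarrow> complex mat" where
  "interpolation T \<rho>0 \<rho>1 w P j =
     kron_mat (complex_of_real ((real T - real j) / real T) \<cdot>\<^sub>m \<rho>0
               + complex_of_real (real j / real T) \<cdot>\<^sub>m \<rho>1) (ket_bra w)
     + complex_of_real (1 / real T) \<cdot>\<^sub>m P"

lemma is_gram_interpolation:
  assumes "j < T" "is_gram n \<rho>0" "is_gram n \<rho>1" "w \<in> carrier_vec d" "is_gram (n * d) P"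
  shows "is_gram (n * d) (interpolation T \<rho>0 \<rho>1 w P j)"
  unfolding interpolation_def using assms
  by (intro is_gram_add is_gram_smult is_gram_kron_ket_bra) auto

context
  fixes n d T :: nat and \<rho>0 \<rho>1 P L :: "complex mat" and w :: "complex vec"
  assumes T: "0 < T"
    and \<rho>: "\<rho>0 \<in> carrier_mat n n" "\<rho>1 \<in> carrier_mat n n"
    and P: "P \<in> carrier_mat (n * d) (n * d)" and L: "L \<in> carrier_mat (n * d) (n * d)"
    and w: "w \<in> carrier_vec d" "vnorm w = 1"
    and fixes_w: "\<forall>\<phi> \<in> carrier_vec n. L *\<^sub>v kron_vec \<phi> w = kron_vec \<phi> w"
    and balance: "ptrace2 n d (L * P * dagger L - P) = \<rho>1 - \<rho>0"
begin

private abbreviation (input) mixture :: "nat \<Rightarrow> complex mat" where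
  "mixture j \<equiv> complex_of_real ((real T - real j) / real T) \<cdot>\<^sub>m \<rho>0
    + complex_of_real (real j / real T) \<cdot>\<^sub>m \<rho>1"

private lemma mixture_carrier: "mixture j \<in> carrier_mat n n"
  using \<rho> by simp

private lemma kron_mixture_carrier: "kron_mat (mixture j) (ket_bra w) \<in> carrier_mat (n * d) (n * d)"
  by (rule carrier_matI) (use \<rho> w in simp_all)

lemma ptrace2_interpolation:
  "ptrace2 n d (interpolation T \<rho>0 \<rho>1 w P j)
    = mixture j + complex_of_real (1 / real T) \<cdot>\<^sub>m ptrace2 n d P"
  unfolding interpolation_def
  using P w mixture_carrier kron_mixture_carrier
  by (simp add: ptrace2_add ptrace2_smult ptrace2_kron_ket_bra)

text \<open>\<open>L\<close> acts trivially on the first summand, so only the \<open>P\<close> part moves, by \<open>\<rho>1 - \<rho>0\<close>.\<close>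
lemma ptrace2_sandwich_interpolation:
  "ptrace2 n d (L * interpolation T \<rho>0 \<rho>1 w P j * dagger L)
    = mixture j + complex_of_real (1 / real T) \<cdot>\<^sub>m (ptrace2 n d P + (\<rho>1 - \<rho>0))"
proof -
  let ?c = "complex_of_real (1 / real T)" and ?K = "kron_mat (mixture j) (ket_bra w)"
  have LPL: "L * P * dagger L \<in> carrier_mat (n * d) (n * d)"
    using mult_carrier_mat[OF mult_carrier_mat[OF L P] dagger_carrier[OF L]] .
  have "L * interpolation T \<rho>0 \<rho>1 w P j * dagger L = L * ?K * dagger L + ?c \<cdot>\<^sub>m (L * P * dagger L)"
    unfolding interpolation_def by (rule sandwich_add_smult[OF L kron_mixture_carrier P])
  also have "L * ?K * dagger L = ?K"
    by (rule sandwich_kron_ket_bra_eq[OF L w(1) fixes_w mixture_carrier])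
  finally have "ptrace2 n d (L * interpolation T \<rho>0 \<rho>1 w P j * dagger L)
      = mixture j + ?c \<cdot>\<^sub>m ptrace2 n d (L * P * dagger L)"
    using LPL w mixture_carrier kron_mixture_carrier
    by (simp add: ptrace2_add ptrace2_smult ptrace2_kron_ket_bra)
  also have "ptrace2 n d (L * P * dagger L) = ptrace2 n d P + (\<rho>1 - \<rho>0)"
  proof (rule eq_matI)
    fix i j assume "i < dim_row (ptrace2 n d P + (\<rho>1 - \<rho>0))" "j < dim_col (ptrace2 n d P + (\<rho>1 - \<rho>0))"
    then have ij: "i < n" "j < n"
      using \<rho> by auto
    have "(ptrace2 n d (L * P * dagger L) - ptrace2 n d P) $$ (i, j) = (\<rho>1 - \<rho>0) $$ (i, j)"
      using balance ptrace2_diff[OF LPL P] by simp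
    then show "ptrace2 n d (L * P * dagger L) $$ (i, j) = (ptrace2 n d P + (\<rho>1 - \<rho>0)) $$ (i, j)"
      using ij \<rho> by (simp add: algebra_simps)
  qed (use \<rho> in auto)
  finally show ?thesis .
qed

lemma ptrace2_interpolation_step:
  "ptrace2 n d (interpolation T \<rho>0 \<rho>1 w P (Suc j))
    = ptrace2 n d (L * interpolation T \<rho>0 \<rho>1 w P j * dagger L)"
proof -
  have "(real T - real (Suc j)) / real T = (real T - real j) / real T - 1 / real T"
    "real (Suc j) / real T = real j / real T + 1 / real T"
    by (simp_all add: diff_divide_distrib add_divide_distrib)
  then have coeffs: "complex_of_real ((real T - real (Suc j)) / real T)
      = complex_of_real ((real T - real j) / real T) - complex_of_real (1 / real T)"
    "complex_of_real (real (Suc j) / real T) = complex_of_real (real j / real T) + complex_of_real (1 / real T)"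
    by (metis of_real_diff, metis of_real_add)
  show ?thesis
    unfolding ptrace2_interpolation ptrace2_sandwich_interpolation coeffs
    by (rule eq_matI) (use \<rho> in \<open>auto simp: algebra_simps\<close>)
qed

lemma ptrace2_interpolation_first:
  "ptrace2 n d (interpolation T \<rho>0 \<rho>1 w P 0) = \<rho>0 + complex_of_real (1 / real T) \<cdot>\<^sub>m ptrace2 n d P"
  unfolding ptrace2_interpolation using T \<rho> by (intro eq_matI) auto

lemma ptrace2_sandwich_interpolation_last:
  "ptrace2 n d (L * interpolation T \<rho>0 \<rho>1 w P (T - 1) * dagger L)
    = \<rho>1 + complex_of_real (1 / real T) \<cdot>\<^sub>m ptrace2 n d P"
proof -
  have "(real T - real (T - 1)) / real T = 1 / real T" "real (T - 1) / real T = 1 - 1 / real T"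
    using T by (simp_all add: of_nat_diff diff_divide_distrib)
  then have coeffs: "complex_of_real ((real T - real (T - 1)) / real T) = complex_of_real (1 / real T)"
    "complex_of_real (real (T - 1) / real T) = 1 - complex_of_real (1 / real T)"
    by (metis, metis of_real_1 of_real_diff)
  show ?thesis
    unfolding ptrace2_sandwich_interpolation coeffs
    by (intro eq_matI) (use \<rho> in \<open>auto simp: algebra_simps\<close>)
qed

end

lemma ptrace2_extended_state:
  assumes p: "p \<in> carrier_vec (n * k * l)" and q: "q \<in> carrier_vec (n * k * l)" and T: "0 < T"
  shows "ptrace2 n (k * (l * 2)) (ket_bra (kron_vec p (vec 2 (\<lambda>i. if i = 0 then 1 else 0))
      + complex_of_real (1 / sqrt (real T)) \<cdot>\<^sub>v kron_vec q (vec 2 (\<lambda>i. if i = 1 then 1 else 0))))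
    = ptrace2 n (k * l) (ket_bra p) + complex_of_real (1 / real T) \<cdot>\<^sub>m ptrace2 n k (ptrace2 (n * k) l (ket_bra q))"
    (is "ptrace2 n _ (ket_bra ?x) = _")
proof -
  let ?s = "complex_of_real (1 / sqrt (real T))"
  have p': "p \<in> carrier_vec (n * (k * l))" and q': "q \<in> carrier_vec (n * (k * l))"
    using p q by (simp_all add: mult.assoc)
  have "ptrace2 n (k * (l * 2)) (ket_bra ?x) = ptrace2 n (k * l) (ptrace2 (n * (k * l)) 2 (ket_bra ?x))"
    using ptrace2_ptrace2[of n "k * l" 2] by (simp add: mult.assoc)
  also have "ptrace2 (n * (k * l)) 2 (ket_bra ?x) = ket_bra p + (?s * cnj ?s) \<cdot>\<^sub>m ket_bra q"
    by (rule ptrace2_ket_bra_qubit[OF p' q'])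
  also have "?s * cnj ?s = complex_of_real (1 / real T)"
    using T by (simp add: real_sqrt_mult[symmetric] flip: of_real_mult)
  finally show ?thesis
    using p' q' ptrace2_ptrace2[of n k l] by (simp add: ptrace2_add ptrace2_smult carrier_matI mult.assoc)
qed

theorem proposition2:
  fixes dA dB dC :: nat
    and idle :: "complex vec" and L :: "complex mat"
    and \<xi> \<tau> v :: "complex vec" and \<pi>bar :: "complex mat"
  assumes dimC: "dC \<ge> dA * dB"
    and idle: "idle \<in> carrier_vec dB" "vnorm idle = 1"
    and L_sub: "subunitary (dA * dB) L"
    and L_idle: "\<forall>\<phi> \<in> carrier_vec dA. L *\<^sub>v kron_vec \<phi> idle = kron_vec \<phi> idle"
    and \<xi>: "\<xi> \<in> carrier_vec (dA * dB * dC)" "\<xi> \<noteq> 0\<^sub>v (dA * dB * dC)"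
    and \<tau>: "\<tau> \<in> carrier_vec (dA * dB * dC)"
    and \<pi>bar_psd: "psd (dA * dB) \<pi>bar"
    and balance: "ptrace2 dA dB (L * \<pi>bar * dagger L - \<pi>bar)
                  = ptrace2 dA (dB * dC) (ket_bra \<tau> - ket_bra \<xi>)"
    and v: "v \<in> carrier_vec (dA * dB * dC)"
    and purif: "ptrace2 (dA * dB) dC (ket_bra v) = \<pi>bar"
  shows "\<forall>T' :: nat. T' > 0 \<longrightarrow>
    (let \<pi> = (\<lambda>j. kron_mat
                   (complex_of_real ((real T' - real j) / real T') \<cdot>\<^sub>m ptrace2 dA (dB * dC) (ket_bra \<xi>)
                    + complex_of_real (real j / real T') \<cdot>\<^sub>m ptrace2 dA (dB * dC) (ket_bra \<tau>))
                   (ket_bra idle)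
                 + complex_of_real (1 / real T') \<cdot>\<^sub>m \<pi>bar);
         ket0 = vec 2 (\<lambda>i. if i = 0 then 1 else 0) :: complex vec;
         ket1 = vec 2 (\<lambda>i. if i = 1 then 1 else 0) :: complex vec
     in (\<forall>j<T'. psd (dA * dB) (\<pi> j))
        \<and> (\<forall>j. j + 2 \<le> T' \<longrightarrow> ptrace2 dA dB (\<pi> (j + 1)) = ptrace2 dA dB (L * \<pi> j * dagger L))
        \<and> constitutes_algorithm dA dB (dC * 2) L T' \<pi>
            (kron_vec \<xi> ket0 + complex_of_real (1 / sqrt (real T')) \<cdot>\<^sub>v kron_vec v ket1)
            (kron_vec \<tau> ket0 + complex_of_real (1 / sqrt (real T')) \<cdot>\<^sub>v kron_vec v ket1))"
  apply (intro allI impI)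
  subgoal premises T' for T'
proof -
  define \<rho>\<xi> where "\<rho>\<xi> = ptrace2 dA (dB * dC) (ket_bra \<xi>)"
  define \<rho>\<tau> where "\<rho>\<tau> = ptrace2 dA (dB * dC) (ket_bra \<tau>)"
  define \<pi> where "\<pi> = interpolation T' \<rho>\<xi> \<rho>\<tau> idle \<pi>bar"
  define x y where "x = kron_vec \<xi> (vec 2 (\<lambda>i. if i = 0 then 1 else 0))
      + complex_of_real (1 / sqrt (real T')) \<cdot>\<^sub>v kron_vec v (vec 2 (\<lambda>i. if i = 1 then 1 else 0))"
    and "y = kron_vec \<tau> (vec 2 (\<lambda>i. if i = 0 then 1 else 0))
      + complex_of_real (1 / sqrt (real T')) \<cdot>\<^sub>v kron_vec v (vec 2 (\<lambda>i. if i = 1 then 1 else 0))"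
  have L: "L \<in> carrier_mat (dA * dB) (dA * dB)" and P: "\<pi>bar \<in> carrier_mat (dA * dB) (dA * dB)"
    using L_sub \<pi>bar_psd by (simp_all add: subunitary_def psd_def)
  have \<rho>: "\<rho>\<xi> \<in> carrier_mat dA dA" "\<rho>\<tau> \<in> carrier_mat dA dA"
    by (simp_all add: \<rho>\<xi>_def \<rho>\<tau>_def ptrace2_carrier)
  have bal: "ptrace2 dA dB (L * \<pi>bar * dagger L - \<pi>bar) = \<rho>\<tau> - \<rho>\<xi>"
    using balance \<xi>(1) \<tau> by (simp add: \<rho>\<xi>_def \<rho>\<tau>_def ptrace2_ket_bra_diff mult.assoc)
  note interpolation = ptrace2_interpolation_first ptrace2_interpolation_step ptrace2_sandwich_interpolation_last
  note interpolation = interpolation[OF T' \<rho> P L idle L_idle bal, folded \<pi>_def]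
  have gram: "\<forall>j<T'. is_gram (dA * dB) (\<pi> j)"
    using is_gram_ptrace2_ket_bra[OF v] \<xi>(1) \<tau> purif idle(1)
    by (auto simp: \<pi>_def \<rho>\<xi>_def \<rho>\<tau>_def mult.assoc intro!: is_gram_interpolation is_gram_ptrace2_ket_bra)
  have "x \<in> carrier_vec (dA * dB * dC * 2)" "y \<in> carrier_vec (dA * dB * dC * 2)"
    unfolding x_def y_def using \<xi>(1) \<tau> v by (simp_all add: kron_vec_carrier)
  then have "constitutes_algorithm dA dB (dC * 2) L T' \<pi> x y"
    using dimC interpolation ptrace2_extended_state[OF \<xi>(1) v T'] ptrace2_extended_state[OF \<tau> v T'] purif
    by (intro constitutes_algorithm_if_consistent[OF L T' _ gram])
      (simp_all add: x_def y_def \<rho>\<xi>_def \<rho>\<tau>_def mult.assoc)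
  moreover have "\<forall>j<T'. psd (dA * dB) (\<pi> j)"
    using gram psd_if_is_gram by blast
  ultimately show ?thesis
    using interpolation(2)
    unfolding Let_def \<pi>_def interpolation_def \<rho>\<xi>_def \<rho>\<tau>_def x_def y_def
    by auto
qed
  done

end
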